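(* Fix $p\ge1$, $\epsilon>0$ and a log-dyadic $\delta\in[0,1)$. For $n\ge1$ let $x_n\in\mathbb{L}_n$, set $r_{n,p}:=\frac{n}{p}-(1+\epsilon)\log_2n$ and $A^{(n)}:={\rm B}_{r_{n',p}}(x_{n'})$. Then, as $n\to\infty$, $W^{p,\infty}\big(\eta^{+,\delta}_{A^{(n)}},\ \eta^{+,\delta}(\infty)\mathbf{1}_{A^{(n)}}\big)\to0$, and there are joint laws of $(h,\eta^{+,\delta}(\infty))$ with marginals ${\rm P}$ and the law of $\eta^{+,\delta}(\infty)$ such that $W^{p,\infty}\big(h^{+,\delta}_{A^{(n)}},\ h_{A^{(n)}}+\eta^{+,\delta}(\infty)\mathbf{1}_{A^{(n)}}\big)\to0$, where $h^{+,\delta}$ has law ${\rm P}^{+,\delta}$.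
   Context: $\mathbb{T}$ is the infinite rooted binary tree with root $0$; $|x|$ is the depth of $x$, $x\wedge y$ the deepest common ancestor; ${\rm B}_r(x)$ is the graph-distance ball; $\mathbb{T}_n$, $\mathbb{L}_n$ are the vertices of depth at most / exactly $n$; $\mathbb{T}(x)$ is the subtree of $x$ and its descendants, identified with $\mathbb{T}$ by a fixed isomorphism sending $0$ to $x$. $l_n=\lfloor\log_2 n\rfloor$, $n'=n-l_n$. $h$ is the centered Gaussian field with ${\rm E}[h(x)h(y)]=|x\wedge y|$; ${\rm P}_n$ its law on $\mathbb{R}^{\mathbb{T}_n}$, ${\rm P}={\rm P}_\infty$. $c_0=\sqrt{2\log2}$, $m_n=c_0n-\frac{3}{2c_0}\log n$, $\Omega_n(u)=\{\min_{\mathbb{L}_n}h\ge -m_n+u\}$; ${\rm P}^{\uparrow u}_{n,v}$ is the law of $h+v$ under ${\rm P}_n(\cdot\mid\Omega_n(u-v))$ and ${\rm P}^{\uparrow u}_v$ its $W^{p,\infty}_{\rm loc}$-limit as $n\to\infty$ (exists). Log-dyadic: of the form $\log_2(q/2^p)$, integers $q\ge1,p\ge0$. ${\rm P}^{+,\delta}$ is the $W^{p,\infty}_{\rm loc}$-limit as $k\to\infty$ of the law of $h_{\mathbb{T}(x_k)}$ ($x_k\in\mathbb{L}_k$) under ${\rm P}^{\uparrow c_0k}_{-c_02^{k+\delta}}$ (exists). $\ddot{\rm P}^{+,\delta}$ is a coupling of fields $h,h^{+,\delta},\eta^{+,\delta}$ on $\mathbb{T}$, invariant in law under automorphisms of $\mathbb{T}$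 fixing $0$ (constructed in the paper), with $h^{+,\delta}=h+\eta^{+,\delta}$ a.s., $h\sim{\rm P}$, $h^{+,\delta}\sim{\rm P}^{+,\delta}$, $\eta^{+,\delta}(0)\sim{\rm P}^{+,\delta}(h(0)\in\cdot)$, and for $x$ a child of $y$, $\|\eta^{+,\delta}(x)-\eta^{+,\delta}(y)\|_p\le C_p|x|2^{-|x|/p}$ ($C_p$ independent of $\delta$) and $\ddot{\rm E}^{+,\delta}(\eta^{+,\delta}(x)-\eta^{+,\delta}(y))\ge0$. Along any infinite branch $(x_n)$ from the root, $\lim_n\eta^{+,\delta}(x_n)$ exists a.s.; its law does not depend on the branch and $\eta^{+,\delta}(\infty)$ denotes a random variable with this law. $W^{p,\infty}$ is the $p$-Wasserstein distance between laws on $\mathbb{R}^{\mathbb{T}}$ w.r.t. the (possibly infinite) sup norm, fields on $A$ extended by $0$ off $A$; $W^{p,\infty}_{\rm loc}$-convergence means $W^{p,\infty}$-convergence of restrictions to each $\mathbb{T}_k$; $\mathbf{1}_A$ is the field equal to $1$ on $A$. *)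

theory Defs
  imports "HOL-Probability.Probability" "HOL-Library.Sublist"
begin

text \<open>Vertices of the infinite rooted binary tree are finite bool lists (the path from
the root); the root 0 is the empty list, the children of x are x @ [b], depth is length,
ancestors are prefixes.\<close>

type_synonym vertex = "bool list"
type_synonym field = "vertex \<Rightarrow> real"

fun lcp :: "vertex \<Rightarrow> vertex \<Rightarrow> vertex" where
  "lcp (a # x) (b # y) = (if a = b then a # lcp x y else [])"
| "lcp _ _ = []"

definition tdist :: "vertex \<Rightarrow> vertex \<Rightarrow> nat" where
  "tdist x y = length x + length y - 2 * length (lcp x y)"

definition ball_T :: "real \<Rightarrow> vertex \<Rightarrow> vertex set" where
  "ball_T r x = {y. real (tdist x y) \<le> r}"

definition T_upto :: "nat \<Rightarrow> vertex set" where "T_upto n = {x. length x \<le> n}"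
definition L_lev :: "nat \<Rightarrow> vertex set" where "L_lev n = {x. length x = n}"

definition tree_aut :: "(vertex \<Rightarrow> vertex) \<Rightarrow> bool" where
  "tree_aut \<sigma> \<longleftrightarrow> bij \<sigma> \<and> \<sigma> [] = [] \<and>
     (\<forall>x y. (\<exists>b. y = x @ [b]) \<longleftrightarrow> (\<exists>b. \<sigma> y = \<sigma> x @ [b]))"

definition fieldM :: "field measure" where
  "fieldM = PiM UNIV (\<lambda>_. borel)"

definition restr :: "vertex set \<Rightarrow> field \<Rightarrow> field" where
  "restr A f = (\<lambda>x. if x \<in> A then f x else 0)"

definition restr_law :: "vertex set \<Rightarrow> field measure \<Rightarrow> field measure" where
  "restr_law A \<mu> = distr \<mu> fieldM (restr A)"

text \<open>The centered Gaussian field with covariance E[h(x)h(y)] = |x \<and> y|, realised as the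
sum of i.i.d. standard normals on the edges along the path from the root.\<close>
definition Pgauss :: "field measure" where
  "Pgauss = distr (PiM UNIV (\<lambda>_::vertex. density lborel std_normal_density)) fieldM
             (\<lambda>\<xi> x. \<Sum>y\<in>{y. prefix y x \<and> y \<noteq> []}. \<xi> y)"

definition Pn :: "nat \<Rightarrow> field measure" where
  "Pn n = restr_law (T_upto n) Pgauss"

definition c0 :: real where "c0 = sqrt (2 * ln 2)"

definition m_n :: "nat \<Rightarrow> real" where
  "m_n n = c0 * real n - 3 / (2 * c0) * ln (real n)"

definition Omega_n :: "nat \<Rightarrow> real \<Rightarrow> field set" where
  "Omega_n n u = {f \<in> space fieldM. \<forall>x\<in>L_lev n. f x \<ge> - m_n n + u}"

definition Pup_n :: "nat \<Rightarrow> real \<Rightarrow> real \<Rightarrow> field measure" where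
  "Pup_n n u v = distr (uniform_measure (Pn n) (Omega_n n (u - v))) fieldM
                   (\<lambda>f. restr (T_upto n) (\<lambda>x. f x + v))"

definition couplings :: "'a measure \<Rightarrow> 'b measure \<Rightarrow> 'a measure \<Rightarrow> 'b measure \<Rightarrow> ('a \<times> 'b) measure set" where
  "couplings MA MB \<mu> \<nu> = {\<pi>. prob_space \<pi> \<and> sets \<pi> = sets (MA \<Otimes>\<^sub>M MB) \<and>
       distr \<pi> MA fst = \<mu> \<and> distr \<pi> MB snd = \<nu>}"

definition Wpow :: "real \<Rightarrow> field measure \<Rightarrow> field measure \<Rightarrow> ennreal" where
  "Wpow p \<mu> \<nu> = (INF \<pi>\<in>couplings fieldM fieldM \<mu> \<nu>.
       \<integral>\<^sup>+ z. (SUP x. ennreal (\<bar>fst z x - snd z x\<bar> powr p)) \<partial>\<pi>)"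

definition Wass :: "real \<Rightarrow> field measure \<Rightarrow> field measure \<Rightarrow> ennreal" where
  "Wass p \<mu> \<nu> = (if Wpow p \<mu> \<nu> = \<top> then \<top> else ennreal (enn2real (Wpow p \<mu> \<nu>) powr (1 / p)))"

definition loc_conv :: "(nat \<Rightarrow> field measure) \<Rightarrow> field measure \<Rightarrow> bool" where
  "loc_conv \<mu>s \<mu> \<longleftrightarrow> prob_space \<mu> \<and> sets \<mu> = sets fieldM \<and>
     (\<forall>p\<ge>1. \<forall>k. (\<lambda>n. Wass p (restr_law (T_upto k) (\<mu>s n)) (restr_law (T_upto k) \<mu>))
                  \<longlonglongrightarrow> 0)"

definition Pup :: "real \<Rightarrow> real \<Rightarrow> field measure" where
  "Pup u v = (THE \<mu>. loc_conv (\<lambda>n. Pup_n n u v) \<mu>)"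

text \<open>x_k = replicate k False; T(x_k) identified with T via y \<mapsto> x_k @ y.\<close>
definition Pplus :: "real \<Rightarrow> field measure" where
  "Pplus \<delta> = (THE \<nu>. loc_conv
      (\<lambda>k. distr (Pup (c0 * real k) (- c0 * 2 powr (real k + \<delta>))) fieldM
               (\<lambda>f y. f (replicate k False @ y))) \<nu>)"

definition log_dyadic :: "real \<Rightarrow> bool" where
  "log_dyadic \<delta> \<longleftrightarrow> (\<exists>q::nat. \<exists>p::nat. q \<ge> 1 \<and> \<delta> = log 2 (real q / 2 ^ p))"

definition eta_lim :: "('w \<Rightarrow> field) \<Rightarrow> (nat \<Rightarrow> bool) \<Rightarrow> 'w \<Rightarrow> real" where
  "eta_lim Eta bs \<omega> = lim (\<lambda>n. Eta \<omega> (map bs [0..<n]))"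

definition plus_coupling :: "real \<Rightarrow> 'w measure \<Rightarrow> ('w \<Rightarrow> field) \<Rightarrow> ('w \<Rightarrow> field) \<Rightarrow> bool" where
  "plus_coupling \<delta> M H Eta \<longleftrightarrow>
     prob_space M \<and> H \<in> M \<rightarrow>\<^sub>M fieldM \<and> Eta \<in> M \<rightarrow>\<^sub>M fieldM \<and>
     (\<forall>\<sigma>. tree_aut \<sigma> \<longrightarrow>
        distr M (fieldM \<Otimes>\<^sub>M fieldM) (\<lambda>\<omega>. (H \<omega> \<circ> \<sigma>, Eta \<omega> \<circ> \<sigma>))
          = distr M (fieldM \<Otimes>\<^sub>M fieldM) (\<lambda>\<omega>. (H \<omega>, Eta \<omega>))) \<and>
     distr M fieldM H = Pgauss \<and>
     distr M fieldM (\<lambda>\<omega>. \<lambda>x. H \<omega> x + Eta \<omega> x) = Pplus \<delta> \<and>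
     distr M borel (\<lambda>\<omega>. Eta \<omega> []) = distr (Pplus \<delta>) borel (\<lambda>f. f []) \<and>
     (\<forall>q\<ge>1. \<exists>C. \<forall>y b.
        (\<integral>\<^sup>+\<omega>. ennreal (\<bar>Eta \<omega> (y @ [b]) - Eta \<omega> y\<bar> powr q) \<partial>M)
          \<le> ennreal ((C * real (length (y @ [b])) * 2 powr (- real (length (y @ [b])) / q)) powr q)) \<and>
     (\<forall>y b. integral\<^sup>L M (\<lambda>\<omega>. Eta \<omega> (y @ [b]) - Eta \<omega> y) \<ge> 0) \<and>
     (\<forall>bs. AE \<omega> in M. convergent (\<lambda>n. Eta \<omega> (map bs [0..<n]))) \<and>
     (\<forall>bs bs'. distr M borel (eta_lim Eta bs) = distr M borel (eta_lim Eta bs'))"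

end

(*
  Let c be the centre of A^(n), at depth N = n', and continue c to an infinite branch. The limit L
  of eta along this branch has the law of eta(infinity), since that law does not depend on the branch,
  so it suffices to show E[sup_{x in A^(n)} |eta(x) - L|^p] -> 0 and to couple (h, eta(infinity))
  as (h, L). For x in the ball the geodesic from x to the end of the branch runs up to lcp x c, down
  to c and then down the branch, and it stays inside the ball until c. Weighting the increment of
  eta on an edge at depth k by w_k = 2^(-k/(4p)), a summable sequence, every such path sum is at
  most (sum w) R^(1/p), where R is the sum of (increment/w)^p over all edges of the ball and of the
  branch below c. By the moment bound on the increments, E[(increment/w)^p] <= C^p k^p 2^(-3k/4)
  at depth k, while the ball has at most (k+1) 2^(k/2) vertices at depth k, none of depth below
  N - r. Hence E[R] is bounded by the tails from N - r and from N of two summable series, and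
  N - r and N both tend to infinity with n.
*)
theory Submission
  imports Defs "HOL-Real_Asymp.Real_Asymp"
begin

section \<open>Couplings and the Wasserstein distance\<close>

lemma measurable_fieldM_component:
  assumes "F \<in> M \<rightarrow>\<^sub>M fieldM"
  shows "(\<lambda>\<omega>. F \<omega> x) \<in> borel_measurable M"
  using assms unfolding fieldM_def
  by (rule measurable_compose[OF _ measurable_component_singleton]) simp

lemma measurable_fieldM_iff_components:
  "F \<in> M \<rightarrow>\<^sub>M fieldM \<longleftrightarrow> (\<forall>x. (\<lambda>\<omega>. F \<omega> x) \<in> borel_measurable M)"
  unfolding fieldM_def by (auto simp: measurable_PiM_single')

lemma restr_measurable: "restr A \<in> fieldM \<rightarrow>\<^sub>M fieldM"
  unfolding measurable_fieldM_iff_components restr_def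
  using measurable_fieldM_component[of "\<lambda>f. f" fieldM] by simp

lemma restr_const_measurable: "(\<lambda>e::real. restr A (\<lambda>_. e)) \<in> borel \<rightarrow>\<^sub>M fieldM"
  unfolding measurable_fieldM_iff_components restr_def by simp

lemma eta_lim_measurable:
  assumes "Eta \<in> M \<rightarrow>\<^sub>M fieldM"
  shows "eta_lim Eta bs \<in> borel_measurable M"
  unfolding eta_lim_def
  by (rule borel_measurable_lim_metric) (rule measurable_fieldM_component[OF assms])

lemma distr_compose_eq_if_distr_eq:
  assumes "X \<in> M \<rightarrow>\<^sub>M N" "Y \<in> M \<rightarrow>\<^sub>M N" "distr M N X = distr M N Y" "F \<in> N \<rightarrow>\<^sub>M K"
  shows "distr M K (\<lambda>\<omega>. F (X \<omega>)) = distr M K (\<lambda>\<omega>. F (Y \<omega>))"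
  using distr_distr[OF assms(4,1)] distr_distr[OF assms(4,2)] assms(3) by (simp add: comp_def)

lemma distr_pair_in_couplings:
  assumes "prob_space M" "X \<in> M \<rightarrow>\<^sub>M MA" "Y \<in> M \<rightarrow>\<^sub>M MB"
  shows "distr M (MA \<Otimes>\<^sub>M MB) (\<lambda>\<omega>. (X \<omega>, Y \<omega>)) \<in> couplings MA MB (distr M MA X) (distr M MB Y)"
proof -
  have XY: "(\<lambda>\<omega>. (X \<omega>, Y \<omega>)) \<in> M \<rightarrow>\<^sub>M MA \<Otimes>\<^sub>M MB" using assms(2,3) by measurable
  show ?thesis
    unfolding couplings_def
    using prob_space.prob_space_distr[OF assms(1) XY]
      distr_distr[OF measurable_fst XY] distr_distr[OF measurable_snd XY]
    by (simp add: comp_def)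
qed

lemma Wpow_distr_le:
  assumes "prob_space M" "F \<in> M \<rightarrow>\<^sub>M fieldM" "G \<in> M \<rightarrow>\<^sub>M fieldM"
  shows "Wpow p (distr M fieldM F) (distr M fieldM G)
           \<le> (\<integral>\<^sup>+\<omega>. (SUP x. ennreal (\<bar>F \<omega> x - G \<omega> x\<bar> powr p)) \<partial>M)"
proof -
  have FG: "(\<lambda>\<omega>. (F \<omega>, G \<omega>)) \<in> M \<rightarrow>\<^sub>M fieldM \<Otimes>\<^sub>M fieldM" using assms(2,3) by measurable
  have "(\<lambda>z::field \<times> field. ennreal (\<bar>fst z x - snd z x\<bar> powr p)) \<in> borel_measurable (fieldM \<Otimes>\<^sub>M fieldM)" for x
    using measurable_fieldM_component[of fst "fieldM \<Otimes>\<^sub>M fieldM" x]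
      measurable_fieldM_component[of snd "fieldM \<Otimes>\<^sub>M fieldM" x]
    by measurable
  then have sup_measurable: "(\<lambda>z::field \<times> field. SUP x. ennreal (\<bar>fst z x - snd z x\<bar> powr p))
      \<in> borel_measurable (fieldM \<Otimes>\<^sub>M fieldM)"
    by (intro borel_measurable_SUP) auto
  have "Wpow p (distr M fieldM F) (distr M fieldM G)
      \<le> (\<integral>\<^sup>+z. (SUP x. ennreal (\<bar>fst z x - snd z x\<bar> powr p)) \<partial>distr M (fieldM \<Otimes>\<^sub>M fieldM) (\<lambda>\<omega>. (F \<omega>, G \<omega>)))"
    unfolding Wpow_def by (rule INF_lower[OF distr_pair_in_couplings[OF assms]])
  also have "\<dots> = (\<integral>\<^sup>+\<omega>. (SUP x. ennreal (\<bar>F \<omega> x - G \<omega> x\<bar> powr p)) \<partial>M)"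
    by (subst nn_integral_distr[OF FG]) (use sup_measurable in auto)
  finally show ?thesis .
qed

lemma Wass_tendsto_zeroI:
  assumes "p \<ge> 1" "eventually (\<lambda>n. Wpow p (\<mu> n) (\<nu> n) \<le> ennreal (B n)) sequentially"
    and "B \<longlonglongrightarrow> 0" "\<And>n. 0 \<le> B n"
  shows "(\<lambda>n. Wass p (\<mu> n) (\<nu> n)) \<longlonglongrightarrow> 0"
proof -
  have Wass_le: "Wass p (\<mu> n) (\<nu> n) \<le> ennreal (B n powr (1/p))"
    if "Wpow p (\<mu> n) (\<nu> n) \<le> ennreal (B n)" for n
  proof -
    have finite: "Wpow p (\<mu> n) (\<nu> n) \<noteq> \<top>" using that by (auto simp: top_unique)
    then have "enn2real (Wpow p (\<mu> n) (\<nu> n)) \<le> B n"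
      using that assms(4)[of n] by (simp add: enn2real_leI)
    then have "enn2real (Wpow p (\<mu> n) (\<nu> n)) powr (1/p) \<le> B n powr (1/p)"
      using assms(1) by (intro powr_mono2) auto
    then show ?thesis unfolding Wass_def using finite by (simp add: ennreal_leI)
  qed
  have "(\<lambda>n. B n powr (1/p)) \<longlonglongrightarrow> 0"
    using assms by (intro tendsto_zero_powrI) auto
  then have root_B: "(\<lambda>n. ennreal (B n powr (1/p))) \<longlonglongrightarrow> 0"
    using tendsto_ennrealI[of "\<lambda>n. B n powr (1/p)" 0] by simp
  show ?thesis
    by (rule tendsto_sandwich[OF _ _ tendsto_const root_B])
       (use Wass_le assms(2) in \<open>auto elim: eventually_mono\<close>)
qed

lemma Wass_distr_tendsto_zero:
  assumes "prob_space M" "p \<ge> 1" "\<And>n. F n \<in> M \<rightarrow>\<^sub>M fieldM" "\<And>n. G n \<in> M \<rightarrow>\<^sub>M fieldM"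
    and "eventually (\<lambda>n. (\<integral>\<^sup>+\<omega>. (SUP x. ennreal (\<bar>F n \<omega> x - G n \<omega> x\<bar> powr p)) \<partial>M) \<le> ennreal (B n))
           sequentially"
    and "B \<longlonglongrightarrow> 0" "\<And>n. 0 \<le> B n"
  shows "(\<lambda>n. Wass p (distr M fieldM (F n)) (distr M fieldM (G n))) \<longlonglongrightarrow> 0"
proof (rule Wass_tendsto_zeroI[OF assms(2) _ assms(6,7)])
  show "eventually (\<lambda>n. Wpow p (distr M fieldM (F n)) (distr M fieldM (G n)) \<le> ennreal (B n)) sequentially"
    using assms(5) by eventually_elim (rule order_trans[OF Wpow_distr_le[OF assms(1,3,4)]])
qed

lemma SUP_restr_diff_powr:
  "(SUP x. ennreal (\<bar>restr A f x - restr A g x\<bar> powr p))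
   = (SUP x. if x \<in> A then ennreal (\<bar>f x - g x\<bar> powr p) else 0)"
  by (intro SUP_cong) (simp_all add: restr_def)

lemma restr_law_distr:
  "F \<in> M \<rightarrow>\<^sub>M fieldM \<Longrightarrow> restr_law A (distr M fieldM F) = distr M fieldM (\<lambda>\<omega>. restr A (F \<omega>))"
  unfolding restr_law_def by (simp add: distr_distr[OF restr_measurable] comp_def)

lemma distr_pair_restr_add:
  assumes "X \<in> M \<rightarrow>\<^sub>M fieldM" "Y \<in> borel_measurable M"
  shows "distr (distr M (fieldM \<Otimes>\<^sub>M borel) (\<lambda>\<omega>. (X \<omega>, Y \<omega>))) fieldM (\<lambda>(f, e). restr A (\<lambda>x. f x + e))
       = distr M fieldM (\<lambda>\<omega>. restr A (\<lambda>x. X \<omega> x + Y \<omega>))"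
proof -
  have [measurable]: "(\<lambda>z. fst z x) \<in> borel_measurable (fieldM \<Otimes>\<^sub>M borel)" for x
    using measurable_fieldM_component[of fst "fieldM \<Otimes>\<^sub>M borel"] by simp
  have "(\<lambda>(f, e). restr A (\<lambda>x. f x + e)) \<in> fieldM \<Otimes>\<^sub>M borel \<rightarrow>\<^sub>M fieldM"
    unfolding measurable_fieldM_iff_components restr_def case_prod_beta
  proof
    fix x show "(\<lambda>z. if x \<in> A then fst z x + snd z else 0) \<in> borel_measurable (fieldM \<Otimes>\<^sub>M borel)"
      by (cases "x \<in> A") simp_all
  qed
  moreover have "(\<lambda>\<omega>. (X \<omega>, Y \<omega>)) \<in> M \<rightarrow>\<^sub>M fieldM \<Otimes>\<^sub>M borel" using assms by measurable
  ultimately show ?thesis by (simp add: distr_distr comp_def)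
qed

lemma Wass_restr_tendsto_zero:
  assumes "prob_space M" "p \<ge> 1" "\<And>n. F n \<in> M \<rightarrow>\<^sub>M fieldM" "\<And>n. G n \<in> M \<rightarrow>\<^sub>M fieldM"
    and "eventually (\<lambda>n. (\<integral>\<^sup>+\<omega>. (SUP x. if x \<in> A n then ennreal (\<bar>F n \<omega> x - G n \<omega> x\<bar> powr p) else 0) \<partial>M)
           \<le> ennreal (B n)) sequentially"
    and "B \<longlonglongrightarrow> 0" "\<And>n. 0 \<le> B n"
  shows "(\<lambda>n. Wass p (distr M fieldM (\<lambda>\<omega>. restr (A n) (F n \<omega>)))
                    (distr M fieldM (\<lambda>\<omega>. restr (A n) (G n \<omega>)))) \<longlonglongrightarrow> 0"
proof (rule Wass_distr_tendsto_zero[OF assms(1,2) _ _ _ assms(6,7)])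
  show "(\<lambda>\<omega>. restr (A n) (F n \<omega>)) \<in> M \<rightarrow>\<^sub>M fieldM" "(\<lambda>\<omega>. restr (A n) (G n \<omega>)) \<in> M \<rightarrow>\<^sub>M fieldM" for n
    using measurable_compose[OF assms(3) restr_measurable] measurable_compose[OF assms(4) restr_measurable]
    by (simp_all add: comp_def)
  show "eventually (\<lambda>n. (\<integral>\<^sup>+\<omega>. (SUP x. ennreal (\<bar>restr (A n) (F n \<omega>) x - restr (A n) (G n \<omega>) x\<bar> powr p)) \<partial>M)
      \<le> ennreal (B n)) sequentially"
    using assms(5) by (simp only: SUP_restr_diff_powr)
qed

section \<open>Paths and balls in the binary tree\<close>

lemma prefix_lcp_left: "prefix (lcp x y) x"
  by (induction x y rule: lcp.induct) auto

lemma prefix_lcp_right: "prefix (lcp x y) y"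
  by (induction x y rule: lcp.induct) auto

lemma lcp_commute: "lcp x y = lcp y x"
  by (induction x y rule: lcp.induct) auto

lemma real_tdist:
  "real (tdist x y) = real (length x) + real (length y) - 2 * real (length (lcp x y))"
  using prefix_length_le[OF prefix_lcp_left, of x y] prefix_length_le[OF prefix_lcp_right, of x y]
  unfolding tdist_def by (simp add: of_nat_diff)

lemma finite_prefixes_with: "finite {y. prefix y z \<and> P y}"
  by (rule finite_subset[of _ "set (prefixes z)"]) auto

definition edge_increment :: "field \<Rightarrow> vertex \<Rightarrow> real" where
  "edge_increment f y = \<bar>f y - f (butlast y)\<bar>"

lemma edge_increment_Nil [simp]: "edge_increment f [] = 0"
  by (simp add: edge_increment_def)

lemma abs_diff_le_sum_edge_increments:
  fixes f :: "vertex \<Rightarrow> real"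
  assumes "prefix a z"
  shows "\<bar>f z - f a\<bar> \<le> (\<Sum>y\<in>{y. prefix y z \<and> length a < length y}. edge_increment f y)"
  using assms
proof (induction z rule: rev_induct)
  case (snoc b z)
  show ?case
  proof (cases "a = z @ [b]")
    case False
    then have az: "prefix a z" using snoc.prems by (simp add: prefix_snoc)
    have path: "{y. prefix y (z @ [b]) \<and> length a < length y}
        = insert (z @ [b]) {y. prefix y z \<and> length a < length y}"
      using az prefix_length_le[OF az] by (auto simp: prefix_snoc)
    have "z @ [b] \<notin> {y. prefix y z \<and> length a < length y}"
      using prefix_length_le by fastforce
    then have "(\<Sum>y\<in>{y. prefix y (z @ [b]) \<and> length a < length y}. edge_increment f y)
        = \<bar>f (z @ [b]) - f z\<bar> + (\<Sum>y\<in>{y. prefix y z \<and> length a < length y}. edge_increment f y)"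
      unfolding path by (simp add: finite_prefixes_with edge_increment_def)
    then show ?thesis using snoc.IH[OF az] by linarith
  qed (simp add: sum_nonneg edge_increment_def)
qed simp

lemma sum_prefixes_weight_le_suminf:
  fixes w :: "nat \<Rightarrow> real"
  assumes "\<And>i. 0 \<le> w i" "summable w"
  shows "(\<Sum>y\<in>{y. prefix y z \<and> P y}. w (length y)) \<le> (\<Sum>i. w i)"
proof -
  have "inj_on length {y. prefix y z \<and> P y}"
    by (auto simp: inj_on_def prefix_def append_eq_append_conv)
  then have "(\<Sum>y\<in>{y. prefix y z \<and> P y}. w (length y)) = (\<Sum>i\<in>length ` {y. prefix y z \<and> P y}. w i)"
    by (simp add: sum.reindex)
  also have "\<dots> \<le> (\<Sum>i\<in>{..length z}. w i)"
    by (intro sum_mono2) (auto simp: assms prefix_length_le)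
  also have "\<dots> \<le> (\<Sum>i. w i)" by (rule sum_le_suminf) (auto simp: assms)
  finally show ?thesis .
qed

lemma card_descendants_at_level:
  fixes a :: vertex
  assumes "length a \<le> k"
  shows "card {y. prefix a y \<and> length y = k} = 2 ^ (k - length a)"
proof -
  have "{y. prefix a y \<and> length y = k} = (\<lambda>z. a @ z) ` {z. set z \<subseteq> UNIV \<and> length z = k - length a}"
    using assms by (auto simp: prefix_def)
  moreover have "card {z::vertex. set z \<subseteq> UNIV \<and> length z = k - length a} = 2 ^ (k - length a)"
    by (subst card_lists_length_eq) auto
  ultimately show ?thesis by (simp add: card_image inj_on_def)
qed

lemma finite_descendants_at_level: "finite {y::vertex. prefix a y \<and> length y = k}"
  by (rule finite_subset[OF _ finite_lists_length_eq[of UNIV k]]) auto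

lemma prefix_map_upt: "i \<le> k \<Longrightarrow> prefix (map bs [0..<i]) (map bs [0..<k])"
  by (metis map_append le_add_diff_inverse upt_add_eq_append zero_le prefixI)

lemma prefix_map_upt_eq:
  assumes "prefix y (map bs [0..<k])"
  shows "y = map bs [0..<length y]"
proof -
  obtain zs where "map bs [0..<k] = y @ zs" using assms by (auto simp: prefix_def)
  then have "y = take (length y) (map bs [0..<k])" by simp
  then show ?thesis using prefix_length_le[OF assms] by (simp add: take_map)
qed

lemma lcp_greatest: "prefix a x \<Longrightarrow> prefix a y \<Longrightarrow> prefix a (lcp x y)"
proof (induction x y arbitrary: a rule: lcp.induct)
  case (1 u x v y)
  then show ?case by (cases a) auto
qed auto

lemma ball_T_length_bounds:
  assumes "y \<in> ball_T r c"
  shows "\<bar>real (length y) - real (length c)\<bar> \<le> r"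
proof -
  have "real (tdist c y) \<le> r" using assms by (simp add: ball_T_def)
  then show ?thesis
    using real_tdist[of c y] prefix_length_le[OF prefix_lcp_left, of c y]
      prefix_length_le[OF prefix_lcp_right, of c y]
    by (simp add: abs_le_iff)
qed

lemma finite_ball_T: "finite (ball_T r c)"
proof (rule finite_subset[OF _ finite_lists_length_le[of UNIV "nat \<lfloor>r + real (length c)\<rfloor>"]])
  show "ball_T r c \<subseteq> {y. set y \<subseteq> UNIV \<and> length y \<le> nat \<lfloor>r + real (length c)\<rfloor>}"
  proof
    fix y assume "y \<in> ball_T r c"
    then have "real (length y) \<le> r + real (length c)"
      using ball_T_length_bounds[of y r c] by (simp add: abs_le_iff)
    then have "length y \<le> nat \<lfloor>r + real (length c)\<rfloor>" by (rule le_nat_floor)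
    then show "y \<in> {y. set y \<subseteq> UNIV \<and> length y \<le> nat \<lfloor>r + real (length c)\<rfloor>}" by simp
  qed
qed simp

lemma tdist_le_on_geodesic:
  assumes "prefix (lcp x c) y" "prefix y x \<or> prefix y c"
  shows "tdist c y \<le> tdist c x"
proof -
  have "prefix (lcp x c) (lcp y c)"
    by (rule lcp_greatest[OF assms(1) prefix_lcp_right])
  then have lcp_le: "length (lcp x c) \<le> length (lcp y c)" by (rule prefix_length_le)
  have "length (lcp x c) \<le> length x" "length (lcp x c) \<le> length y"
    using prefix_length_le[OF prefix_lcp_left] prefix_length_le[OF assms(1)] by auto
  moreover have "length y \<le> length x \<or> length y \<le> length (lcp y c)"
    using assms(2) prefix_length_le[OF lcp_greatest[OF prefix_order.refl, of y c]]
    by (auto dest: prefix_length_le)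
  ultimately have "real (tdist c y) \<le> real (tdist c x)"
    using lcp_le real_tdist[of c y] real_tdist[of c x] lcp_commute[of c y] lcp_commute[of c x]
    by auto
  then show ?thesis by simp
qed

lemma ball_T_geodesic_closed:
  assumes "x \<in> ball_T r c" "prefix (lcp x c) y" "prefix y x \<or> prefix y c"
  shows "y \<in> ball_T r c"
  using assms(1) tdist_le_on_geodesic[OF assms(2,3)] by (simp add: ball_T_def)

lemma ball_T_level_subset:
  assumes "r \<le> real (length c)"
  shows "ball_T r c \<inter> L_lev k
     \<subseteq> (\<Union>j\<in>{j. j \<le> k \<and> k \<le> 2 * j \<and> j \<le> length c}. {y. prefix (take j c) y \<and> length y = k})"
proof
  fix y assume y: "y \<in> ball_T r c \<inter> L_lev k"
  define j where "j = length (lcp y c)"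
  have "take j c = lcp y c"
    using prefix_lcp_right[of y c] unfolding j_def by (metis append_eq_conv_conj prefix_def)
  moreover have "j \<le> k" "j \<le> length c"
    using y prefix_length_le[OF prefix_lcp_left, of y c] prefix_length_le[OF prefix_lcp_right, of y c]
    unfolding j_def L_lev_def by auto
  moreover have "k \<le> 2 * j"
    using y assms real_tdist[of c y] unfolding j_def ball_T_def L_lev_def by (simp add: lcp_commute)
  ultimately show "y \<in> (\<Union>j\<in>{j. j \<le> k \<and> k \<le> 2 * j \<and> j \<le> length c}. {y. prefix (take j c) y \<and> length y = k})"
    using y prefix_lcp_left[of y c] unfolding L_lev_def by auto
qed

lemma card_ball_T_level_le:
  assumes "r \<le> real (length c)"
  shows "real (card (ball_T r c \<inter> L_lev k)) \<le> (real k + 1) * 2 powr (real k / 2)"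
proof -
  define I where "I = {j. j \<le> k \<and> k \<le> 2 * j \<and> j \<le> length c}"
  have finite_I: "finite I" unfolding I_def by (rule finite_subset[of _ "{..k}"]) auto
  have "card (ball_T r c \<inter> L_lev k) \<le> card (\<Union>j\<in>I. {y. prefix (take j c) y \<and> length y = k})"
    unfolding I_def
    by (intro card_mono ball_T_level_subset[OF assms]) (auto intro: finite_descendants_at_level)
  also have "\<dots> \<le> (\<Sum>j\<in>I. card {y. prefix (take j c) y \<and> length y = k})"
    by (rule card_UN_le[OF finite_I])
  finally have "real (card (ball_T r c \<inter> L_lev k)) \<le> (\<Sum>j\<in>I. real (card {y. prefix (take j c) y \<and> length y = k}))"
    by (simp flip: of_nat_sum)
  also have "\<dots> \<le> (\<Sum>j\<in>I. 2 powr (real k / 2))"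
  proof (rule sum_mono)
    fix j assume "j \<in> I"
    then have j: "j \<le> k" "real k \<le> 2 * real j" "j \<le> length c" unfolding I_def by auto
    have "real (card {y. prefix (take j c) y \<and> length y = k}) = 2 ^ (k - j)"
      using card_descendants_at_level[of "take j c" k] j by simp
    also have "\<dots> = 2 powr (real k - real j)"
      using j by (simp add: powr_realpow of_nat_diff flip: of_nat_diff)
    also have "\<dots> \<le> 2 powr (real k / 2)" using j by simp
    finally show "real (card {y. prefix (take j c) y \<and> length y = k}) \<le> 2 powr (real k / 2)" .
  qed
  also have "\<dots> = real (card I) * 2 powr (real k / 2)" by simp
  also have "\<dots> \<le> (real k + 1) * 2 powr (real k / 2)"
  proof (rule mult_right_mono)
    have "card I \<le> card {..k}" unfolding I_def by (rule card_mono) auto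
    then show "real (card I) \<le> real k + 1" by simp
  qed simp
  finally show ?thesis .
qed

lemma sum_le_suminf_shift:
  fixes f :: "nat \<Rightarrow> real"
  assumes "finite K" "K \<subseteq> {m..}" "\<And>k. 0 \<le> f k" "summable f"
  shows "sum f K \<le> (\<Sum>i. f (i + m))"
proof -
  have "sum f K = (\<Sum>i\<in>(\<lambda>k. k - m) ` K. f (i + m))"
    by (rule sum.reindex_bij_witness[where i = "\<lambda>i. i + m" and j = "\<lambda>k. k - m"]) (use assms(2) in auto)
  also have "\<dots> \<le> (\<Sum>i. f (i + m))"
    by (rule sum_le_suminf) (use assms summable_ignore_initial_segment[OF assms(4)] in auto)
  finally show ?thesis .
qed

lemma sum_ball_T_le_tail:
  fixes g h :: "nat \<Rightarrow> real"
  assumes "r \<le> real (length c)" "\<And>k. 0 \<le> g k"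
    and "\<And>k. (real k + 1) * 2 powr (real k / 2) * g k \<le> h k" "summable h"
  shows "(\<Sum>y\<in>ball_T r c. g (length y)) \<le> (\<Sum>i. h (i + nat \<lceil>real (length c) - r\<rceil>))"
proof -
  have h_nonneg: "0 \<le> h k" for k
    using assms(2,3)[of k] by (smt (verit) mult_nonneg_nonneg powr_ge_zero of_nat_0_le_iff)
  have "(\<Sum>y\<in>ball_T r c. g (length y))
      = (\<Sum>k\<in>length ` ball_T r c. \<Sum>y\<in>ball_T r c \<inter> L_lev k. g (length y))"
    by (subst sum.image_gen[OF finite_ball_T, where g = length]) (simp add: L_lev_def Int_def)
  also have "\<dots> = (\<Sum>k\<in>length ` ball_T r c. real (card (ball_T r c \<inter> L_lev k)) * g k)"
    by (intro sum.cong refl) (simp add: L_lev_def)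
  also have "\<dots> \<le> (\<Sum>k\<in>length ` ball_T r c. h k)"
    by (intro sum_mono order_trans[OF mult_right_mono[OF card_ball_T_level_le] assms(3)] assms(1,2))
  also have "\<dots> \<le> (\<Sum>i. h (i + nat \<lceil>real (length c) - r\<rceil>))"
  proof (intro sum_le_suminf_shift finite_imageI finite_ball_T assms(4) h_nonneg subsetI)
    fix k assume "k \<in> length ` ball_T r c"
    then have "real (length c) - r \<le> real k" by (auto simp: abs_le_iff dest!: ball_T_length_bounds)
    then show "k \<in> {nat \<lceil>real (length c) - r\<rceil>..}" by (simp add: nat_le_iff ceiling_le_iff)
  qed
  finally show ?thesis .
qed

section \<open>Chaining along paths\<close>

lemma chaining_path_le:
  fixes f :: "vertex \<Rightarrow> real" and w :: "nat \<Rightarrow> real"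
  assumes "prefix a z" "\<And>i. 0 \<le> w i" "summable w" "0 \<le> B"
    and "\<And>y. prefix y z \<Longrightarrow> length a < length y \<Longrightarrow> edge_increment f y \<le> w (length y) * B"
  shows "\<bar>f z - f a\<bar> \<le> (\<Sum>i. w i) * B"
proof -
  have "\<bar>f z - f a\<bar> \<le> (\<Sum>y\<in>{y. prefix y z \<and> length a < length y}. edge_increment f y)"
    by (rule abs_diff_le_sum_edge_increments[OF assms(1)])
  also have "\<dots> \<le> (\<Sum>y\<in>{y. prefix y z \<and> length a < length y}. w (length y)) * B"
    unfolding sum_distrib_right by (rule sum_mono) (use assms(5) in auto)
  also have "\<dots> \<le> (\<Sum>i. w i) * B"
    by (intro mult_right_mono sum_prefixes_weight_le_suminf) (use assms in auto)
  finally show ?thesis .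
qed

lemma ball_deviation_le:
  fixes Et :: field and w :: "nat \<Rightarrow> real"
  assumes branch: "map bs [0..<N] = c"
    and conv: "convergent (\<lambda>k. Et (map bs [0..<k]))"
    and x: "x \<in> ball_T r c"
    and w: "\<And>i. 0 \<le> w i" "summable w" and B: "0 \<le> B"
    and ball_edges: "\<And>y. y \<in> ball_T r c \<Longrightarrow> edge_increment Et y \<le> w (length y) * B"
    and branch_edges: "\<And>k. N < k \<Longrightarrow> edge_increment Et (map bs [0..<k]) \<le> w k * B"
  shows "\<bar>Et x - lim (\<lambda>k. Et (map bs [0..<k]))\<bar> \<le> 3 * (\<Sum>i. w i) * B"
proof -
  define a where "a = lcp x c"
  have ax: "prefix a x" and ac: "prefix a c"
    unfolding a_def by (rule prefix_lcp_left, rule prefix_lcp_right)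
  have len_c: "length c = N" using branch by auto
  have "\<bar>Et z - Et a\<bar> \<le> (\<Sum>i. w i) * B" if "prefix a z" "prefix z x \<or> prefix z c" for z
  proof (rule chaining_path_le[OF that(1) w B])
    fix y assume y: "prefix y z" "length a < length y"
    have "prefix a y" using prefix_length_prefix[OF that(1) y(1)] y(2) by simp
    moreover have "prefix y x \<or> prefix y c" using that(2) y(1) by (auto intro: prefix_order.trans)
    ultimately have "y \<in> ball_T r c" using ball_T_geodesic_closed[OF x] unfolding a_def by blast
    then show "edge_increment Et y \<le> w (length y) * B" by (rule ball_edges)
  qed
  then have x_path: "\<bar>Et x - Et a\<bar> \<le> (\<Sum>i. w i) * B" and c_path: "\<bar>Et c - Et a\<bar> \<le> (\<Sum>i. w i) * B"
    using ax ac by auto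
  have branch_path: "\<bar>Et (map bs [0..<k]) - Et c\<bar> \<le> (\<Sum>i. w i) * B" if "N \<le> k" for k
  proof (rule chaining_path_le[OF _ w B])
    show "prefix c (map bs [0..<k])" using prefix_map_upt[OF that, of bs] branch by simp
    fix y assume y: "prefix y (map bs [0..<k])" "length c < length y"
    then show "edge_increment Et y \<le> w (length y) * B"
      using branch_edges[of "length y"] prefix_map_upt_eq[OF y(1)] len_c by simp
  qed
  have "\<bar>Et x - Et (map bs [0..<k])\<bar> \<le> 3 * (\<Sum>i. w i) * B" if "N \<le> k" for k
    using x_path c_path branch_path[OF that] by linarith
  moreover have "(\<lambda>k. Et (map bs [0..<k])) \<longlonglongrightarrow> lim (\<lambda>k. Et (map bs [0..<k]))"
    using conv by (simp add: convergent_LIMSEQ_iff)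
  ultimately show ?thesis
    by (intro LIMSEQ_le_const2[OF tendsto_rabs[OF tendsto_diff[OF tendsto_const]]]) auto
qed

lemma le_mult_root_if_div_powr_le:
  fixes d w R p :: real
  assumes "0 \<le> d" "0 < w" "p \<ge> 1" "(d / w) powr p \<le> R"
  shows "d \<le> w * R powr (1/p)"
proof -
  have "d / w = ((d / w) powr p) powr (1/p)"
    using assms by (simp add: powr_powr)
  also have "\<dots> \<le> R powr (1/p)"
    using assms by (intro powr_mono2) auto
  finally show ?thesis using assms by (simp add: field_simps)
qed

lemma ball_deviation_powr_le:
  fixes Et :: field and w :: "nat \<Rightarrow> real"
  assumes p: "p \<ge> 1" and branch: "map bs [0..<N] = c"
    and conv: "convergent (\<lambda>k. Et (map bs [0..<k]))"
    and x: "x \<in> ball_T r c"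
    and w: "\<And>i. 0 < w i" "summable w" and R: "0 \<le> R"
    and ball_edges: "\<And>y. y \<in> ball_T r c \<Longrightarrow> (edge_increment Et y / w (length y)) powr p \<le> R"
    and branch_edges: "\<And>k. N < k \<Longrightarrow> (edge_increment Et (map bs [0..<k]) / w k) powr p \<le> R"
  shows "\<bar>Et x - lim (\<lambda>k. Et (map bs [0..<k]))\<bar> powr p \<le> (3 * (\<Sum>i. w i)) powr p * R"
proof -
  have edge_le: "edge_increment Et y \<le> w (length y) * R powr (1/p)"
    if "(edge_increment Et y / w (length y)) powr p \<le> R" for y
    using le_mult_root_if_div_powr_le[OF _ w(1) p that] by (simp add: edge_increment_def)
  have "\<bar>Et x - lim (\<lambda>k. Et (map bs [0..<k]))\<bar> \<le> 3 * (\<Sum>i. w i) * R powr (1/p)"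
  proof (rule ball_deviation_le[OF branch conv x less_imp_le[OF w(1)] w(2)])
    show "edge_increment Et y \<le> w (length y) * R powr (1/p)" if "y \<in> ball_T r c" for y
      by (rule edge_le[OF ball_edges[OF that]])
    show "edge_increment Et (map bs [0..<k]) \<le> w k * R powr (1/p)" if "N < k" for k
      using edge_le[of "map bs [0..<k]"] branch_edges[OF that] by simp
  qed simp
  then have "\<bar>Et x - lim (\<lambda>k. Et (map bs [0..<k]))\<bar> powr p \<le> (3 * (\<Sum>i. w i) * R powr (1/p)) powr p"
    using p by (intro powr_mono2) auto
  also have "\<dots> = (3 * (\<Sum>i. w i)) powr p * R"
    using p R suminf_nonneg[OF w(2)] w(1) by (simp add: powr_mult powr_powr less_imp_le)
  finally show ?thesis .
qed

lemma SUP_ball_deviation_powr_le: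
  fixes Et :: field and w :: "nat \<Rightarrow> real"
  assumes p: "p \<ge> 1" and branch: "map bs [0..<N] = c"
    and conv: "convergent (\<lambda>k. Et (map bs [0..<k]))"
    and w: "\<And>i. 0 < w i" "summable w"
  shows "(SUP x. if x \<in> ball_T r c then ennreal (\<bar>Et x - lim (\<lambda>k. Et (map bs [0..<k]))\<bar> powr p) else 0)
     \<le> ennreal ((3 * (\<Sum>i. w i)) powr p) *
        (ennreal (\<Sum>y\<in>ball_T r c. (edge_increment Et y / w (length y)) powr p)
         + (\<Sum>i. ennreal ((edge_increment Et (map bs [0..<N+1+i]) / w (N+1+i)) powr p)))"
    (is "_ \<le> _ * (ennreal ?Q + ?T)")
proof (cases "?T = \<top>")
  case True
  have "0 < (\<Sum>i. w i)" by (rule suminf_pos[OF w(2,1)])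
  then show ?thesis using True by (simp add: ennreal_mult_top)
next
  case False
  then obtain t where T: "?T = ennreal t" and t: "0 \<le> t" by (cases ?T rule: ennreal_cases) auto
  have Q: "0 \<le> ?Q" by (simp add: sum_nonneg)
  have deviation: "\<bar>Et x - lim (\<lambda>k. Et (map bs [0..<k]))\<bar> powr p \<le> (3 * (\<Sum>i. w i)) powr p * (?Q + t)"
    if x: "x \<in> ball_T r c" for x
  proof (rule ball_deviation_powr_le[OF p branch conv x w])
    show "(edge_increment Et y / w (length y)) powr p \<le> ?Q + t" if "y \<in> ball_T r c" for y
      using member_le_sum[OF that _ finite_ball_T, of "\<lambda>y. (edge_increment Et y / w (length y)) powr p"] t
      by simp
    show "(edge_increment Et (map bs [0..<k]) / w k) powr p \<le> ?Q + t" if "N < k" for k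
    proof -
      obtain i where k: "k = N + 1 + i" using \<open>N < k\<close> by (metis Suc_eq_plus1 add_Suc less_iff_Suc_add)
      have "ennreal ((edge_increment Et (map bs [0..<N+1+i]) / w (N+1+i)) powr p) \<le> ?T"
        using sum_le_suminf[OF summableI, of "{i}"] by simp
      then show ?thesis using T t Q k by simp
    qed
  qed (use Q t in simp)
  show ?thesis
  proof (rule SUP_least)
    fix x
    show "(if x \<in> ball_T r c then ennreal (\<bar>Et x - lim (\<lambda>k. Et (map bs [0..<k]))\<bar> powr p) else 0)
        \<le> ennreal ((3 * (\<Sum>i. w i)) powr p) * (ennreal ?Q + ?T)"
    proof (cases "x \<in> ball_T r c")
      case True
      have "ennreal (\<bar>Et x - lim (\<lambda>k. Et (map bs [0..<k]))\<bar> powr p)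
          \<le> ennreal ((3 * (\<Sum>i. w i)) powr p * (?Q + t))"
        using deviation[OF True] by (rule ennreal_leI)
      then show ?thesis unfolding T using True Q t by (simp add: ennreal_mult ennreal_plus)
    qed simp
  qed
qed

lemma nn_integral_sum_weighted_increments_le:
  fixes Eta :: "'w \<Rightarrow> field" and w g :: "nat \<Rightarrow> real"
  assumes Eta: "Eta \<in> M \<rightarrow>\<^sub>M fieldM" and "finite S" "\<And>k. 0 \<le> g k"
    and moment: "\<And>y. (\<integral>\<^sup>+\<omega>. ennreal ((edge_increment (Eta \<omega>) y / w (length y)) powr p) \<partial>M)
                     \<le> ennreal (g (length y))"
  shows "(\<integral>\<^sup>+\<omega>. (\<Sum>y\<in>S. ennreal ((edge_increment (Eta \<omega>) y / w (length y)) powr p)) \<partial>M)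
     \<le> ennreal (\<Sum>y\<in>S. g (length y))"
proof -
  have [measurable]: "(\<lambda>\<omega>. Eta \<omega> y) \<in> borel_measurable M" for y
    by (rule measurable_fieldM_component[OF Eta])
  have "(\<integral>\<^sup>+\<omega>. (\<Sum>y\<in>S. ennreal ((edge_increment (Eta \<omega>) y / w (length y)) powr p)) \<partial>M)
      = (\<Sum>y\<in>S. \<integral>\<^sup>+\<omega>. ennreal ((edge_increment (Eta \<omega>) y / w (length y)) powr p) \<partial>M)"
    by (rule nn_integral_sum) (simp add: edge_increment_def)
  also have "\<dots> \<le> (\<Sum>y\<in>S. ennreal (g (length y)))"
    by (intro sum_mono moment)
  finally show ?thesis using assms(3) by simp
qed

lemma nn_integral_suminf_weighted_increments_le:
  fixes Eta :: "'w \<Rightarrow> field" and w g :: "nat \<Rightarrow> real" and ys :: "nat \<Rightarrow> vertex"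
  assumes Eta: "Eta \<in> M \<rightarrow>\<^sub>M fieldM"
    and g: "\<And>k. 0 \<le> g k" "summable (\<lambda>i. g (length (ys i)))"
    and moment: "\<And>y. (\<integral>\<^sup>+\<omega>. ennreal ((edge_increment (Eta \<omega>) y / w (length y)) powr p) \<partial>M)
                     \<le> ennreal (g (length y))"
  shows "(\<integral>\<^sup>+\<omega>. (\<Sum>i. ennreal ((edge_increment (Eta \<omega>) (ys i) / w (length (ys i))) powr p)) \<partial>M)
     \<le> ennreal (\<Sum>i. g (length (ys i)))"
proof -
  have [measurable]: "(\<lambda>\<omega>. Eta \<omega> y) \<in> borel_measurable M" for y
    by (rule measurable_fieldM_component[OF Eta])
  have "(\<integral>\<^sup>+\<omega>. (\<Sum>i. ennreal ((edge_increment (Eta \<omega>) (ys i) / w (length (ys i))) powr p)) \<partial>M)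
      = (\<Sum>i. \<integral>\<^sup>+\<omega>. ennreal ((edge_increment (Eta \<omega>) (ys i) / w (length (ys i))) powr p) \<partial>M)"
    by (rule nn_integral_suminf) (simp add: edge_increment_def)
  also have "\<dots> \<le> (\<Sum>i. ennreal (g (length (ys i))))"
    by (intro suminf_le moment) auto
  also have "\<dots> = ennreal (\<Sum>i. g (length (ys i)))"
    using g by (intro suminf_ennreal_eq summable_sums) auto
  finally show ?thesis .
qed

lemma nn_integral_ball_deviation_le:
  fixes Eta :: "'w \<Rightarrow> field" and w g :: "nat \<Rightarrow> real"
  assumes p: "p \<ge> 1" and branch: "map bs [0..<N] = c"
    and Eta: "Eta \<in> M \<rightarrow>\<^sub>M fieldM"
    and conv: "AE \<omega> in M. convergent (\<lambda>k. Eta \<omega> (map bs [0..<k]))"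
    and w: "\<And>i. 0 < w i" "summable w"
    and g: "\<And>k. 0 \<le> g k" "summable g"
    and moment: "\<And>y. (\<integral>\<^sup>+\<omega>. ennreal ((edge_increment (Eta \<omega>) y / w (length y)) powr p) \<partial>M)
                     \<le> ennreal (g (length y))"
  shows "(\<integral>\<^sup>+\<omega>. (SUP x. if x \<in> ball_T r c
                     then ennreal (\<bar>Eta \<omega> x - lim (\<lambda>k. Eta \<omega> (map bs [0..<k]))\<bar> powr p) else 0) \<partial>M)
     \<le> ennreal ((3 * (\<Sum>i. w i)) powr p) * ennreal ((\<Sum>y\<in>ball_T r c. g (length y)) + (\<Sum>i. g (N + 1 + i)))"
proof -
  define Q where "Q = (\<lambda>\<omega>. \<Sum>y\<in>ball_T r c. ennreal ((edge_increment (Eta \<omega>) y / w (length y)) powr p))"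
  define T where "T = (\<lambda>\<omega>. \<Sum>i. ennreal ((edge_increment (Eta \<omega>) (map bs [0..<N+1+i]) / w (N+1+i)) powr p))"
  have [measurable]: "(\<lambda>\<omega>. Eta \<omega> y) \<in> borel_measurable M" for y
    by (rule measurable_fieldM_component[OF Eta])
  have [measurable]: "Q \<in> borel_measurable M" "T \<in> borel_measurable M"
    unfolding Q_def T_def edge_increment_def by measurable
  have summable_tail: "summable (\<lambda>i. g (N + 1 + i))"
    using summable_ignore_initial_segment[OF g(2), of "N + 1"] by (simp add: add.commute)
  have "AE \<omega> in M. (SUP x. if x \<in> ball_T r c
          then ennreal (\<bar>Eta \<omega> x - lim (\<lambda>k. Eta \<omega> (map bs [0..<k]))\<bar> powr p) else 0)
      \<le> ennreal ((3 * (\<Sum>i. w i)) powr p) * (Q \<omega> + T \<omega>)"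
    using conv
  proof eventually_elim
    case (elim \<omega>)
    have "Q \<omega> = ennreal (\<Sum>y\<in>ball_T r c. (edge_increment (Eta \<omega>) y / w (length y)) powr p)"
      unfolding Q_def by (rule sum_ennreal) simp
    then show ?case unfolding T_def using SUP_ball_deviation_powr_le[OF p branch elim w, of r] by simp
  qed
  then have "(\<integral>\<^sup>+\<omega>. (SUP x. if x \<in> ball_T r c
                then ennreal (\<bar>Eta \<omega> x - lim (\<lambda>k. Eta \<omega> (map bs [0..<k]))\<bar> powr p) else 0) \<partial>M)
      \<le> (\<integral>\<^sup>+\<omega>. ennreal ((3 * (\<Sum>i. w i)) powr p) * (Q \<omega> + T \<omega>) \<partial>M)"
    by (rule nn_integral_mono_AE)
  also have "\<dots> = ennreal ((3 * (\<Sum>i. w i)) powr p) * ((\<integral>\<^sup>+\<omega>. Q \<omega> \<partial>M) + (\<integral>\<^sup>+\<omega>. T \<omega> \<partial>M))"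
    by (simp add: nn_integral_cmult nn_integral_add)
  also have "\<dots> \<le> ennreal ((3 * (\<Sum>i. w i)) powr p)
      * (ennreal (\<Sum>y\<in>ball_T r c. g (length y)) + ennreal (\<Sum>i. g (N + 1 + i)))"
  proof (intro mult_left_mono add_mono)
    show "(\<integral>\<^sup>+\<omega>. Q \<omega> \<partial>M) \<le> ennreal (\<Sum>y\<in>ball_T r c. g (length y))"
      unfolding Q_def by (rule nn_integral_sum_weighted_increments_le[OF Eta finite_ball_T g(1) moment])
    have "summable (\<lambda>i. g (length (map bs [0..<N+1+i])))"
      using summable_tail by (simp only: length_map length_upt diff_zero)
    from nn_integral_suminf_weighted_increments_le[OF Eta g(1) this moment]
    show "(\<integral>\<^sup>+\<omega>. T \<omega> \<partial>M) \<le> ennreal (\<Sum>i. g (N + 1 + i))"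
      unfolding T_def by (simp only: length_map length_upt diff_zero)
  qed simp
  also have "\<dots> = ennreal ((3 * (\<Sum>i. w i)) powr p) * ennreal ((\<Sum>y\<in>ball_T r c. g (length y)) + (\<Sum>i. g (N + 1 + i)))"
    using g(1) summable_tail by (simp add: ennreal_plus sum_nonneg suminf_nonneg)
  finally show ?thesis .
qed

section \<open>Weights and tail bounds\<close>

lemma summable_if_exponential_decay:
  fixes f :: "nat \<Rightarrow> real"
  assumes "\<And>k. 0 \<le> f k" "0 < a" "(\<lambda>k. f k * 2 powr (a * real k)) \<longlonglongrightarrow> 0"
  shows "summable f"
proof (rule summable_comparison_test_ev[OF _ summable_geometric[of "2 powr (- a)"]])
  have "eventually (\<lambda>k. f k * 2 powr (a * real k) < 1) sequentially"
    using order_tendstoD(2)[OF assms(3)] by simp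
  then show "eventually (\<lambda>k. norm (f k) \<le> (2 powr (- a)) ^ k) sequentially"
  proof eventually_elim
    case (elim k)
    have "f k = f k * 2 powr (a * real k) * 2 powr (- a * real k)"
      by (simp add: mult.assoc flip: powr_add)
    also have "\<dots> \<le> 2 powr (- a * real k)"
      using elim by (intro mult_left_le_one_le) (auto simp: assms(1))
    finally show ?case using assms(1)[of k] by (simp add: powr_realpow[symmetric] powr_powr mult.commute)
  qed
qed (use assms(2) in \<open>simp add: powr_less_one\<close>)

lemma suminf_tail_tendsto_zero:
  fixes f :: "nat \<Rightarrow> real"
  assumes "summable f" "filterlim m at_top F"
  shows "((\<lambda>n. \<Sum>i. f (i + m n)) \<longlongrightarrow> 0) F"
proof -
  have "(\<lambda>k. suminf f - sum f {..<k}) \<longlonglongrightarrow> suminf f - suminf f"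
    by (intro tendsto_diff tendsto_const summable_LIMSEQ assms(1))
  then have "(\<lambda>k. \<Sum>i. f (i + k)) \<longlonglongrightarrow> 0"
    by (simp add: suminf_minus_initial_segment[OF assms(1)])
  then show ?thesis by (rule filterlim_compose[OF _ assms(2)])
qed

locale power_weights =
  fixes p C :: real
  assumes p_ge_1: "1 \<le> p"
begin

definition weight :: "nat \<Rightarrow> real" where
  "weight k = 2 powr (- real k / (4 * p))"

(* moment_decay k = (C k 2 powr (-k/p)) powr p / weight k powr p is the moment bound on an
   increment into depth k divided by the p-th power of its weight; ball_mass multiplies it by the
   bound of card_ball_T_level_le on the number of ball vertices at depth k. *)
definition moment_decay :: "nat \<Rightarrow> real" where
  "moment_decay k = C powr p * real k powr p * 2 powr (- 3 * real k / 4)"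

definition ball_mass :: "nat \<Rightarrow> real" where
  "ball_mass k = (real k + 1) * 2 powr (real k / 2) * moment_decay k"

definition deviation_bound :: "nat \<Rightarrow> real \<Rightarrow> real" where
  "deviation_bound N r = (3 * (\<Sum>i. weight i)) powr p *
     ((\<Sum>i. ball_mass (i + nat \<lceil>real N - r\<rceil>)) + (\<Sum>i. moment_decay (N + 1 + i)))"

lemma weight_pos: "0 < weight k"
  by (simp add: weight_def)

lemma summable_weight: "summable weight"
proof -
  have "weight = (\<lambda>k. (2 powr (- 1 / (4 * p))) ^ k)"
    by (auto simp: weight_def powr_powr simp flip: powr_realpow)
  moreover have "2 powr (- 1 / (4 * p)) < 1" using p_ge_1 by (intro powr_less_one) auto
  ultimately show ?thesis by (simp add: summable_geometric)
qed

lemma moment_decay_nonneg: "0 \<le> moment_decay k"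
  by (simp add: moment_decay_def)

lemma ball_mass_nonneg: "0 \<le> ball_mass k"
  by (simp add: ball_mass_def moment_decay_nonneg)

lemma summable_ball_mass: "summable ball_mass"
proof (rule summable_if_exponential_decay[OF ball_mass_nonneg, of "1/8"])
  have "(\<lambda>k::nat. (real k + 1) * real k powr p * 2 powr (- real k / 8)) \<longlonglongrightarrow> 0"
    by real_asymp
  then have "(\<lambda>k. C powr p * ((real k + 1) * real k powr p * 2 powr (- real k / 8))) \<longlonglongrightarrow> 0"
    by (rule tendsto_mult_right_zero)
  moreover have "ball_mass k * 2 powr (1/8 * real k)
      = C powr p * ((real k + 1) * real k powr p * 2 powr (- real k / 8))" for k
  proof -
    have "2 powr (real k / 2) * 2 powr (- 3 * real k / 4) * 2 powr (1/8 * real k) = (2::real) powr (- real k / 8)"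
      by (simp flip: powr_add)
    then show ?thesis unfolding ball_mass_def moment_decay_def by (simp add: ac_simps)
  qed
  ultimately show "(\<lambda>k. ball_mass k * 2 powr (1/8 * real k)) \<longlonglongrightarrow> 0" by simp
qed simp

lemma summable_moment_decay: "summable moment_decay"
proof (rule summable_comparison_test[OF _ summable_ball_mass], intro exI allI impI)
  fix k :: nat
  have "1 \<le> (real k + 1) * 2 powr (real k / 2)"
    using mult_mono[of 1 "real k + 1" 1 "2 powr (real k / 2)"] ge_one_powr_ge_zero[of 2 "real k / 2"]
    by simp
  then show "norm (moment_decay k) \<le> ball_mass k"
    unfolding ball_mass_def using moment_decay_nonneg[of k] mult_right_mono by fastforce
qed

lemma deviation_bound_nonneg: "0 \<le> deviation_bound N r"
  unfolding deviation_bound_def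
  using summable_ignore_initial_segment[OF summable_ball_mass, of "nat \<lceil>real N - r\<rceil>"]
    summable_ignore_initial_segment[OF summable_moment_decay, of "N + 1"]
  by (intro mult_nonneg_nonneg add_nonneg_nonneg suminf_nonneg)
     (auto simp: ball_mass_nonneg moment_decay_nonneg add.commute)

lemma deviation_bound_tendsto_zero:
  assumes "filterlim N at_top F" "filterlim (\<lambda>n. real (N n) - r n) at_top F"
  shows "((\<lambda>n. deviation_bound (N n) (r n)) \<longlongrightarrow> 0) F"
proof -
  have "filterlim (\<lambda>n. nat \<lceil>real (N n) - r n\<rceil>) at_top F"
    unfolding filterlim_at_top
  proof
    fix Z :: nat
    show "eventually (\<lambda>n. Z \<le> nat \<lceil>real (N n) - r n\<rceil>) F"
      using assms(2) unfolding filterlim_at_top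
      by (auto elim!: allE[of _ "real Z"] eventually_mono simp: le_nat_iff le_ceiling_iff)
  qed
  then have "((\<lambda>n. \<Sum>i. ball_mass (i + nat \<lceil>real (N n) - r n\<rceil>)) \<longlongrightarrow> 0) F"
    by (rule suminf_tail_tendsto_zero[OF summable_ball_mass])
  moreover have "((\<lambda>n. \<Sum>i. moment_decay (i + (N n + 1))) \<longlongrightarrow> 0) F"
    by (rule suminf_tail_tendsto_zero[OF summable_moment_decay])
       (rule filterlim_compose[OF filterlim_subseq assms(1)], simp add: strict_mono_def)
  ultimately have "((\<lambda>n. (3 * (\<Sum>i. weight i)) powr p * ((\<Sum>i. ball_mass (i + nat \<lceil>real (N n) - r n\<rceil>))
      + (\<Sum>i. moment_decay (i + (N n + 1))))) \<longlongrightarrow> (3 * (\<Sum>i. weight i)) powr p * (0 + 0)) F"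
    by (intro tendsto_intros)
  then show ?thesis by (simp add: deviation_bound_def add.commute)
qed

lemma nn_integral_weighted_increment_le:
  assumes Eta: "Eta \<in> M \<rightarrow>\<^sub>M fieldM"
    and moment: "\<And>y b. (\<integral>\<^sup>+\<omega>. ennreal (\<bar>Eta \<omega> (y @ [b]) - Eta \<omega> y\<bar> powr p) \<partial>M)
        \<le> ennreal ((C * real (length (y @ [b])) * 2 powr (- real (length (y @ [b])) / p)) powr p)"
  shows "(\<integral>\<^sup>+\<omega>. ennreal ((edge_increment (Eta \<omega>) y / weight (length y)) powr p) \<partial>M)
     \<le> ennreal (moment_decay (length y))"
proof (cases y rule: rev_cases)
  case (snoc z b)
  define k where "k = length y"
  have [measurable]: "(\<lambda>\<omega>. Eta \<omega> x) \<in> borel_measurable M" for x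
    by (rule measurable_fieldM_component[OF Eta])
  have "(\<integral>\<^sup>+\<omega>. ennreal ((edge_increment (Eta \<omega>) y / weight k) powr p) \<partial>M)
      = (\<integral>\<^sup>+\<omega>. ennreal (\<bar>Eta \<omega> (z @ [b]) - Eta \<omega> z\<bar> powr p) * ennreal (1 / weight k powr p) \<partial>M)"
    by (intro nn_integral_cong)
       (simp add: snoc edge_increment_def powr_divide weight_pos flip: ennreal_mult)
  also have "\<dots> = (\<integral>\<^sup>+\<omega>. ennreal (\<bar>Eta \<omega> (z @ [b]) - Eta \<omega> z\<bar> powr p) \<partial>M) * ennreal (1 / weight k powr p)"
    by (rule nn_integral_multc) measurable
  also have "\<dots> \<le> ennreal ((C * real k * 2 powr (- real k / p)) powr p) * ennreal (1 / weight k powr p)"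
    using moment[of z b] unfolding k_def snoc by (rule mult_right_mono) simp
  also have "\<dots> = ennreal ((C * real k * 2 powr (- real k / p)) powr p / weight k powr p)"
    by (simp flip: ennreal_mult)
  also have "(C * real k * 2 powr (- real k / p)) powr p / weight k powr p = moment_decay k"
  proof -
    have "(2 powr (- real k / p)) powr p / weight k powr p = (2::real) powr (- 3 * real k / 4)"
      using p_ge_1 by (simp add: weight_def powr_powr flip: powr_diff)
    then show ?thesis by (simp add: moment_decay_def powr_mult mult.assoc flip: times_divide_eq_right)
  qed
  finally show ?thesis unfolding k_def .
qed simp

lemma nn_integral_ball_deviation_le_bound:
  assumes branch: "map bs [0..<N] = c" and r: "r \<le> real N"
    and Eta: "Eta \<in> M \<rightarrow>\<^sub>M fieldM"
    and conv: "AE \<omega> in M. convergent (\<lambda>k. Eta \<omega> (map bs [0..<k]))"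
    and moment: "\<And>y b. (\<integral>\<^sup>+\<omega>. ennreal (\<bar>Eta \<omega> (y @ [b]) - Eta \<omega> y\<bar> powr p) \<partial>M)
        \<le> ennreal ((C * real (length (y @ [b])) * 2 powr (- real (length (y @ [b])) / p)) powr p)"
  shows "(\<integral>\<^sup>+\<omega>. (SUP x. if x \<in> ball_T r c
                     then ennreal (\<bar>Eta \<omega> x - lim (\<lambda>k. Eta \<omega> (map bs [0..<k]))\<bar> powr p) else 0) \<partial>M)
     \<le> ennreal (deviation_bound N r)"
proof -
  have len_c: "length c = N" using branch by auto
  have "(\<Sum>y\<in>ball_T r c. moment_decay (length y)) \<le> (\<Sum>i. ball_mass (i + nat \<lceil>real N - r\<rceil>))"
    using sum_ball_T_le_tail[of r c moment_decay ball_mass] r summable_ball_mass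
    unfolding len_c by (simp add: moment_decay_nonneg ball_mass_def)
  then have "ennreal ((3 * (\<Sum>i. weight i)) powr p)
        * ennreal ((\<Sum>y\<in>ball_T r c. moment_decay (length y)) + (\<Sum>i. moment_decay (N + 1 + i)))
      \<le> ennreal ((3 * (\<Sum>i. weight i)) powr p)
        * ennreal ((\<Sum>i. ball_mass (i + nat \<lceil>real N - r\<rceil>)) + (\<Sum>i. moment_decay (N + 1 + i)))"
    by (intro mult_left_mono ennreal_leI add_right_mono) simp_all
  also have "\<dots> = ennreal (deviation_bound N r)"
    unfolding deviation_bound_def by (rule ennreal_mult'[symmetric]) simp
  finally have bound: "ennreal ((3 * (\<Sum>i. weight i)) powr p)
        * ennreal ((\<Sum>y\<in>ball_T r c. moment_decay (length y)) + (\<Sum>i. moment_decay (N + 1 + i)))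
      \<le> ennreal (deviation_bound N r)" .
  from nn_integral_ball_deviation_le[OF p_ge_1 branch Eta conv weight_pos summable_weight
      moment_decay_nonneg summable_moment_decay nn_integral_weighted_increment_le[OF Eta moment]]
  show ?thesis using bound by (rule order_trans)
qed

end

lemma depth_shift_tendsto: "filterlim (\<lambda>n::nat. n - nat \<lfloor>log 2 (real n)\<rfloor>) at_top sequentially"
proof -
  have "filterlim (\<lambda>n::nat. real n - log 2 (real n)) at_top sequentially" by real_asymp
  then have "filterlim (\<lambda>n. real (n - nat \<lfloor>log 2 (real n)\<rfloor>)) at_top sequentially"
  proof (rule filterlim_at_top_mono)
    show "eventually (\<lambda>n. real n - log 2 (real n) \<le> real (n - nat \<lfloor>log 2 (real n)\<rfloor>)) sequentially"
      using eventually_ge_at_top[of "1::nat"]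
    proof eventually_elim
      case (elim n)
      have "log 2 (real n) < real n"
        using elim less_exp[of n] by (simp add: log_less_iff powr_realpow)
      moreover have "real_of_int \<lfloor>log 2 (real n)\<rfloor> \<le> log 2 (real n)" "0 \<le> \<lfloor>log 2 (real n)\<rfloor>"
        using elim by simp_all
      ultimately have "nat \<lfloor>log 2 (real n)\<rfloor> < n" by linarith
      with \<open>real_of_int \<lfloor>log 2 (real n)\<rfloor> \<le> log 2 (real n)\<close> \<open>0 \<le> \<lfloor>log 2 (real n)\<rfloor>\<close>
      show ?case by (simp add: of_nat_diff)
    qed
  qed
  then show ?thesis by (simp add: filterlim_sequentially_iff_filterlim_real)
qed

lemma radius_le_depth:
  fixes p \<epsilon> :: real
  assumes "p \<ge> 1" "\<epsilon> > 0" "1 \<le> N"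
  shows "real N / p - (1 + \<epsilon>) * log 2 (real N) \<le> real N"
proof -
  have "real N / p \<le> real N" using assms(1) by (simp add: divide_le_eq mult_le_cancel_left1)
  moreover have "0 \<le> (1 + \<epsilon>) * log 2 (real N)" using assms by simp
  ultimately show ?thesis by linarith
qed

lemma depth_minus_radius_tendsto:
  fixes p \<epsilon> :: real
  assumes "p \<ge> 1" "\<epsilon> > 0"
  shows "filterlim (\<lambda>N::nat. real N - (real N / p - (1 + \<epsilon>) * log 2 (real N))) at_top sequentially"
proof -
  have "filterlim (\<lambda>N::nat. log 2 (real N)) at_top sequentially" by real_asymp
  then show ?thesis
  proof (rule filterlim_at_top_mono)
    show "eventually (\<lambda>N::nat. log 2 (real N) \<le> real N - (real N / p - (1 + \<epsilon>) * log 2 (real N)))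
        sequentially"
      using eventually_ge_at_top[of "1::nat"]
    proof eventually_elim
      case (elim N)
      have "real N / p \<le> real N" using assms(1) by (simp add: divide_le_eq mult_le_cancel_left1)
      moreover have "log 2 (real N) \<le> (1 + \<epsilon>) * log 2 (real N)"
        using assms elim by (simp add: algebra_simps)
      ultimately show ?case by linarith
    qed
  qed
qed

section \<open>Coupling with the limit along a branch\<close>

lemma plus_coupling_ball_deviation:
  fixes r :: "nat \<Rightarrow> real" and c :: "nat \<Rightarrow> vertex"
  assumes coupling: "plus_coupling \<delta> M H Eta" and p: "p \<ge> 1"
    and N: "filterlim N at_top sequentially" and gap: "filterlim (\<lambda>n. real (N n) - r n) at_top sequentially"
    and centres: "eventually (\<lambda>n. length (c n) = N n \<and> r n \<le> real (N n)) sequentially"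
  obtains L B where "\<And>n. L n \<in> borel_measurable M"
    and "\<And>n. distr M borel (L n) = distr M borel (eta_lim Eta (\<lambda>_. False))"
    and "B \<longlonglongrightarrow> 0" and "\<And>n. 0 \<le> B n"
    and "eventually (\<lambda>n. (\<integral>\<^sup>+\<omega>. (SUP x. if x \<in> ball_T (r n) (c n)
            then ennreal (\<bar>Eta \<omega> x - L n \<omega>\<bar> powr p) else 0) \<partial>M) \<le> ennreal (B n)) sequentially"
proof -
  have Eta: "Eta \<in> M \<rightarrow>\<^sub>M fieldM"
    and conv: "\<forall>bs. AE \<omega> in M. convergent (\<lambda>n. Eta \<omega> (map bs [0..<n]))"
    and law: "\<forall>bs bs'. distr M borel (eta_lim Eta bs) = distr M borel (eta_lim Eta bs')"
    using coupling unfolding plus_coupling_def by auto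
  obtain C where moment: "\<And>y b. (\<integral>\<^sup>+\<omega>. ennreal (\<bar>Eta \<omega> (y @ [b]) - Eta \<omega> y\<bar> powr p) \<partial>M)
        \<le> ennreal ((C * real (length (y @ [b])) * 2 powr (- real (length (y @ [b])) / p)) powr p)"
    using coupling p unfolding plus_coupling_def by blast
  interpret power_weights p C by unfold_locales (rule p)
  define bs where "bs = (\<lambda>n i. if i < length (c n) then c n ! i else False)"
  have branch: "map (bs n) [0..<length (c n)] = c n" for n
    by (rule nth_equalityI) (simp_all add: bs_def)
  show ?thesis
  proof
    show "(\<lambda>n. deviation_bound (N n) (r n)) \<longlonglongrightarrow> 0"
      by (rule deviation_bound_tendsto_zero[OF N gap])
    show "eventually (\<lambda>n. (\<integral>\<^sup>+\<omega>. (SUP x. if x \<in> ball_T (r n) (c n)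
            then ennreal (\<bar>Eta \<omega> x - eta_lim Eta (bs n) \<omega>\<bar> powr p) else 0) \<partial>M)
          \<le> ennreal (deviation_bound (N n) (r n))) sequentially"
      using centres
    proof eventually_elim
      case (elim n)
      then show ?case
        using nn_integral_ball_deviation_le_bound[of "bs n" "N n" "c n" "r n", OF _ _ Eta spec[OF conv] moment]
          branch[of n] by (simp add: eta_lim_def)
    qed
  qed (use eta_lim_measurable[OF Eta] law deviation_bound_nonneg in auto)
qed

context
  fixes \<delta> p :: real and M :: "'w measure" and H Eta :: "'w \<Rightarrow> field" and E :: "'w \<Rightarrow> real"
    and L :: "nat \<Rightarrow> 'w \<Rightarrow> real" and B :: "nat \<Rightarrow> real" and A :: "nat \<Rightarrow> vertex set"
  assumes coupling: "plus_coupling \<delta> M H Eta" and p: "p \<ge> 1"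
    and E: "E \<in> borel_measurable M"
    and L: "\<And>n. L n \<in> borel_measurable M" "\<And>n. distr M borel (L n) = distr M borel E"
    and B: "B \<longlonglongrightarrow> 0" "\<And>n. 0 \<le> B n"
    and deviation: "eventually (\<lambda>n. (\<integral>\<^sup>+\<omega>. (SUP x. if x \<in> A n
          then ennreal (\<bar>Eta \<omega> x - L n \<omega>\<bar> powr p) else 0) \<partial>M) \<le> ennreal (B n)) sequentially"
begin

lemma plus_coupling_measurable:
  "prob_space M" "H \<in> M \<rightarrow>\<^sub>M fieldM" "Eta \<in> M \<rightarrow>\<^sub>M fieldM" "(\<lambda>\<omega> x. H \<omega> x + Eta \<omega> x) \<in> M \<rightarrow>\<^sub>M fieldM"
proof -
  show "prob_space M" "H \<in> M \<rightarrow>\<^sub>M fieldM" "Eta \<in> M \<rightarrow>\<^sub>M fieldM"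
    using coupling unfolding plus_coupling_def by auto
  then show "(\<lambda>\<omega> x. H \<omega> x + Eta \<omega> x) \<in> M \<rightarrow>\<^sub>M fieldM"
    unfolding measurable_fieldM_iff_components by (auto intro: borel_measurable_add)
qed

lemma Wass_restr_eta_tendsto_zero:
  "(\<lambda>n. Wass p (distr M fieldM (\<lambda>\<omega>. restr (A n) (Eta \<omega>)))
                (distr M fieldM (\<lambda>\<omega>. restr (A n) (\<lambda>_. E \<omega>)))) \<longlonglongrightarrow> 0"
proof -
  have "distr M fieldM (\<lambda>\<omega>. restr (A n) (\<lambda>_. E \<omega>)) = distr M fieldM (\<lambda>\<omega>. restr (A n) (\<lambda>_. L n \<omega>))" for n
    by (rule distr_compose_eq_if_distr_eq[OF E L(1) L(2)[symmetric] restr_const_measurable])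
  moreover have "(\<lambda>n. Wass p (distr M fieldM (\<lambda>\<omega>. restr (A n) (Eta \<omega>)))
      (distr M fieldM (\<lambda>\<omega>. restr (A n) (\<lambda>_. L n \<omega>)))) \<longlonglongrightarrow> 0"
    using deviation L(1) plus_coupling_measurable(3)
    by (intro Wass_restr_tendsto_zero[OF plus_coupling_measurable(1) p _ _ _ B])
       (simp_all add: measurable_fieldM_iff_components)
  ultimately show ?thesis by simp
qed

lemma Wass_restr_plus_tendsto_zero:
  "\<exists>J :: nat \<Rightarrow> (field \<times> real) measure.
     (\<forall>n. J n \<in> couplings fieldM borel Pgauss (distr M borel E)) \<and>
     (\<lambda>n. Wass p (restr_law (A n) (Pplus \<delta>))
                 (distr (J n) fieldM (\<lambda>(f, e). restr (A n) (\<lambda>x. f x + e)))) \<longlonglongrightarrow> 0"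
proof (intro exI conjI allI)
  note measurable = plus_coupling_measurable
  have law_H: "distr M fieldM H = Pgauss"
    and law_plus: "distr M fieldM (\<lambda>\<omega> x. H \<omega> x + Eta \<omega> x) = Pplus \<delta>"
    using coupling unfolding plus_coupling_def by auto
  define J where "J n = distr M (fieldM \<Otimes>\<^sub>M borel) (\<lambda>\<omega>. (H \<omega>, L n \<omega>))" for n
  show "J n \<in> couplings fieldM borel Pgauss (distr M borel E)" for n
    using distr_pair_in_couplings[OF measurable(1,2) L(1)] law_H L(2) by (simp add: J_def)
  have [measurable]: "(\<lambda>\<omega>. H \<omega> x) \<in> borel_measurable M" for x
    by (rule measurable_fieldM_component[OF measurable(2)])
  show "(\<lambda>n. Wass p (restr_law (A n) (Pplus \<delta>)) (distr (J n) fieldM (\<lambda>(f, e). restr (A n) (\<lambda>x. f x + e))))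
      \<longlonglongrightarrow> 0"
    unfolding J_def distr_pair_restr_add[OF measurable(2) L(1)] law_plus[symmetric] restr_law_distr[OF measurable(4)]
    using deviation L(1) measurable(4)
    by (intro Wass_restr_tendsto_zero[OF measurable(1) p _ _ _ B]) (simp_all add: measurable_fieldM_iff_components)
qed

end

theorem corollary1p11:
  fixes p \<epsilon> \<delta> :: real and xs :: "nat \<Rightarrow> vertex"
    and M :: "'w measure" and H Eta :: "'w \<Rightarrow> field"
  assumes "p \<ge> 1" and "\<epsilon> > 0"
    and "log_dyadic \<delta>" and "0 \<le> \<delta>" and "\<delta> < 1"
    and "\<forall>n\<ge>1. xs n \<in> L_lev n"
    and "plus_coupling \<delta> M H Eta"
  defines "A \<equiv> (\<lambda>n::nat. let n' = n - nat \<lfloor>log 2 (real n)\<rfloor>;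
                      r = real n' / p - (1 + \<epsilon>) * log 2 (real n')
                  in ball_T r (xs n'))"
    and "Einf \<equiv> eta_lim Eta (\<lambda>_. False)"
  shows "(\<lambda>n. Wass p (distr M fieldM (\<lambda>\<omega>. restr (A n) (Eta \<omega>)))
                    (distr M fieldM (\<lambda>\<omega>. restr (A n) (\<lambda>_. Einf \<omega>)))) \<longlonglongrightarrow> 0
     \<and> (\<exists>J :: nat \<Rightarrow> (field \<times> real) measure.
          (\<forall>n. J n \<in> couplings fieldM borel Pgauss (distr M borel Einf)) \<and>
          (\<lambda>n. Wass p (restr_law (A n) (Pplus \<delta>))
                      (distr (J n) fieldM (\<lambda>(f, e). restr (A n) (\<lambda>x. f x + e)))) \<longlonglongrightarrow> 0)"
proof -
  \<comment> \<open>The hypotheses on \<open>\<delta>\<close> only ensure that \<open>Pplus \<delta>\<close> exists; what the proof uses of it is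
    packaged in \<open>plus_coupling\<close>.\<close>
  define N where "N n = n - nat \<lfloor>log 2 (real n)\<rfloor>" for n :: nat
  define r where "r n = real (N n) / p - (1 + \<epsilon>) * log 2 (real (N n))" for n
  have A: "A n = ball_T (r n) (xs (N n))" for n unfolding A_def N_def r_def Let_def ..
  have N_lim: "filterlim N at_top sequentially" unfolding N_def by (rule depth_shift_tendsto)
  have gap: "filterlim (\<lambda>n. real (N n) - r n) at_top sequentially"
    unfolding r_def by (rule filterlim_compose[OF depth_minus_radius_tendsto[OF assms(1,2)] N_lim])
  have "eventually (\<lambda>n. 1 \<le> N n) sequentially" using N_lim by (simp add: filterlim_at_top)
  then have centres: "eventually (\<lambda>n. length (xs (N n)) = N n \<and> r n \<le> real (N n)) sequentially"
    by eventually_elim (use assms(6) radius_le_depth[OF assms(1,2)] in \<open>auto simp: L_lev_def r_def\<close>)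
  obtain L B where L: "\<And>n. L n \<in> borel_measurable M" "\<And>n. distr M borel (L n) = distr M borel Einf"
    and B: "B \<longlonglongrightarrow> 0" "\<And>n. 0 \<le> B n"
    and deviation: "eventually (\<lambda>n. (\<integral>\<^sup>+\<omega>. (SUP x. if x \<in> ball_T (r n) (xs (N n))
          then ennreal (\<bar>Eta \<omega> x - L n \<omega>\<bar> powr p) else 0) \<partial>M) \<le> ennreal (B n)) sequentially"
    using plus_coupling_ball_deviation[OF assms(7,1) N_lim gap centres] unfolding Einf_def by blast
  have Einf: "Einf \<in> borel_measurable M"
    unfolding Einf_def using assms(7) by (simp add: eta_lim_measurable plus_coupling_def)
  show ?thesis
    using Wass_restr_eta_tendsto_zero[OF assms(7,1) Einf L B deviation[folded A]]
      Wass_restr_plus_tendsto_zero[OF assms(7,1) Einf L B deviation[folded A]]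
    by blast
qed

end
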